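(* Let $H$ be a complex infinite-dimensional separable Hilbert space and let $(f_n)_{n=1}^\infty$ and $(g_n)_{n=1}^\infty$ be frames for $H$ with analysis operators $U$ and $V$. If $I-VU^*$ is a compact operator on $\ell^2$, then both $(f_n)_{n=1}^\infty$ and $(g_n)_{n=1}^\infty$ are near-Riesz bases.
   Context: The analysis operator of a frame $(f_n)$ is $U:H\to\ell^2$, $Ux=(\langle x,f_n\rangle)_n$. The excess of a frame is the maximal number of elements that can be deleted so that the remaining sequence is still a frame; it equals $\dim\operatorname{Ker}U^*$. A near-Riesz basis is a frame with finite excess. *)

theory Defs
  imports "HOL-Analysis.Analysis"
begin

text \<open>The inner product is linear in the first argument and
  conjugate-linear in the second (as in the frame literature).\<close>

class complex_vector = ab_group_add +
  fixes scaleC :: "complex \<Rightarrow> 'a \<Rightarrow> 'a" (infixr "*\<^sub>C" 75)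
  assumes scaleC_add_right: "a *\<^sub>C (x + y) = a *\<^sub>C x + a *\<^sub>C y"
    and scaleC_add_left: "(a + b) *\<^sub>C x = a *\<^sub>C x + b *\<^sub>C x"
    and scaleC_scaleC: "a *\<^sub>C (b *\<^sub>C x) = (a * b) *\<^sub>C x"
    and scaleC_one: "1 *\<^sub>C x = x"

class complex_inner = complex_vector +
  fixes cinner :: "'a \<Rightarrow> 'a \<Rightarrow> complex"
  assumes cinner_add_left: "cinner (x + y) z = cinner x z + cinner y z"
    and cinner_scaleC_left: "cinner (a *\<^sub>C x) y = a * cinner x y"
    and cinner_commute: "cinner y x = cnj (cinner x y)"
    and cinner_ge_zero: "0 \<le> Re (cinner x x)"
    and cinner_eq_zero_iff: "cinner x x = 0 \<longleftrightarrow> x = 0"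

definition hnorm :: "'a::complex_inner \<Rightarrow> real" where
  "hnorm x = sqrt (Re (cinner x x))"

class complex_hilbert = complex_inner +
  assumes hilbert_complete:
    "(\<forall>e>0. \<exists>N. \<forall>m\<ge>N. \<forall>n\<ge>N. sqrt (Re (cinner (X m - X n) (X m - X n))) < e) \<Longrightarrow>
       \<exists>L. (\<lambda>n. sqrt (Re (cinner (X n - L) (X n - L)))) \<longlonglongrightarrow> 0"

definition separable_hilbert :: "'a::complex_hilbert itself \<Rightarrow> bool" where
  "separable_hilbert _ \<longleftrightarrow>
     (\<exists>D::'a set. countable D \<and> (\<forall>x e. e > 0 \<longrightarrow> (\<exists>d\<in>D. hnorm (x - d) < e)))"

definition cspan :: "'a::complex_vector set \<Rightarrow> 'a set" where
  "cspan S = {x. \<exists>T c. finite T \<and> T \<subseteq> S \<and> x = (\<Sum>s\<in>T. c s *\<^sub>C s)}"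

definition infinite_dimensional :: "'a::complex_vector itself \<Rightarrow> bool" where
  "infinite_dimensional _ \<longleftrightarrow> (\<forall>S::'a set. finite S \<longrightarrow> cspan S \<noteq> UNIV)"

definition l2 :: "(nat \<Rightarrow> complex) set" where
  "l2 = {c. summable (\<lambda>n. (cmod (c n))\<^sup>2)}"

definition l2norm :: "(nat \<Rightarrow> complex) \<Rightarrow> real" where
  "l2norm c = sqrt (\<Sum>n. (cmod (c n))\<^sup>2)"

definition l2inner :: "(nat \<Rightarrow> complex) \<Rightarrow> (nat \<Rightarrow> complex) \<Rightarrow> complex" where
  "l2inner c d = (\<Sum>n. c n * cnj (d n))"

definition l2_compact :: "((nat \<Rightarrow> complex) \<Rightarrow> (nat \<Rightarrow> complex)) \<Rightarrow> bool" where
  "l2_compact T \<longleftrightarrow> (\<forall>c\<in>l2. T c \<in> l2) \<and>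
     (\<forall>X. (\<forall>n. X n \<in> l2) \<and> (\<exists>M. \<forall>n. l2norm (X n) \<le> M) \<longrightarrow>
        (\<exists>(r::nat \<Rightarrow> nat) L. strict_mono r \<and> L \<in> l2 \<and> (\<lambda>k. l2norm (T (X (r k)) - L)) \<longlonglongrightarrow> 0))"

text \<open>A frame indexed by the subset \<open>I\<close> of \<open>\<nat>\<close> (used to express deletion of elements).\<close>
definition frame_on :: "nat set \<Rightarrow> (nat \<Rightarrow> 'a::complex_hilbert) \<Rightarrow> bool" where
  "frame_on I f \<longleftrightarrow> (\<exists>A B. 0 < A \<and> A \<le> B \<and>
     (\<forall>x. summable (\<lambda>n. if n \<in> I then (cmod (cinner x (f n)))\<^sup>2 else 0) \<and>
          A * (hnorm x)\<^sup>2 \<le> (\<Sum>n. if n \<in> I then (cmod (cinner x (f n)))\<^sup>2 else 0) \<and>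
          (\<Sum>n. if n \<in> I then (cmod (cinner x (f n)))\<^sup>2 else 0) \<le> B * (hnorm x)\<^sup>2))"

definition frame :: "(nat \<Rightarrow> 'a::complex_hilbert) \<Rightarrow> bool" where
  "frame f \<longleftrightarrow> frame_on UNIV f"

definition analysis_op :: "(nat \<Rightarrow> 'a::complex_hilbert) \<Rightarrow> 'a \<Rightarrow> (nat \<Rightarrow> complex)" where
  "analysis_op f x = (\<lambda>n. cinner x (f n))"

definition analysis_adj :: "(nat \<Rightarrow> 'a::complex_hilbert) \<Rightarrow> (nat \<Rightarrow> complex) \<Rightarrow> 'a" where
  "analysis_adj f c = (THE y. \<forall>x. cinner x y = l2inner (analysis_op f x) c)"

text \<open>Excess: maximal number of elements that can be deleted so that the rest is still
  a frame. A near-Riesz basis is a frame with finite excess, i.e. the cardinalities of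
  deletable index sets are finite and bounded.\<close>
definition near_riesz :: "(nat \<Rightarrow> 'a::complex_hilbert) \<Rightarrow> bool" where
  "near_riesz f \<longleftrightarrow> frame f \<and>
     (\<exists>N::nat. \<forall>S. frame_on (UNIV - S) f \<longrightarrow> finite S \<and> card S \<le> N)"

end

theory Submission
  imports Defs
begin

text \<open>For a frame \<open>h\<close> with analysis operator \<open>U\<close> let \<open>K = (Ran U)\<^sup>\<bottom>\<close> \<open>= Ker U\<^sup>*\<close>.
  If \<open>T\<close> is compact on \<open>\<ell>\<^sup>2\<close> and does not shrink distances on \<open>K\<close>, the unit ball of \<open>K\<close> has
  a finite net of mesh \<open>1/\<surd>2\<close> with \<open>N\<close> points, say, and orthonormal subsets of \<open>K\<close> have
  at most \<open>N\<close> elements.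
  If deleting the indices in \<open>S\<close> leaves a frame, a Riesz representation argument for the
  reduced frame gives, for each \<open>s \<in> S\<close>, a vector of \<open>K\<close> that restricts to \<open>\<delta>\<^sub>s\<close> on \<open>S\<close>;
  Gram--Schmidt turns these into \<open>|S|\<close> orthonormal vectors of \<open>K\<close>, whence \<open>|S| \<le> N\<close>.
  For \<open>T = I - V U\<^sup>*\<close>: on \<open>Ker U\<^sup>*\<close> the operator \<open>T\<close> is the identity, and on \<open>(Ran V)\<^sup>\<bottom>\<close>
  it subtracts a vector of \<open>Ran V\<close>, which by Pythagoras cannot shrink distances.\<close>

section \<open>The sequence space \<open>\<ell>\<^sup>2\<close>\<close>

definition l2_sqnorm :: "(nat \<Rightarrow> complex) \<Rightarrow> real" where
  "l2_sqnorm c = (\<Sum>n. (cmod (c n))\<^sup>2)"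

lemma mem_l2_iff: "c \<in> l2 \<longleftrightarrow> summable (\<lambda>n. (cmod (c n))\<^sup>2)"
  by (simp add: l2_def)

lemma l2norm_eq_sqrt_sqnorm: "l2norm c = sqrt (l2_sqnorm c)"
  by (simp add: l2norm_def l2_sqnorm_def)

lemma l2_sqnorm_nonneg: "c \<in> l2 \<Longrightarrow> 0 \<le> l2_sqnorm c"
  unfolding l2_sqnorm_def mem_l2_iff by (intro suminf_nonneg) auto

lemma l2_sqnorm_ge_coordinate: "c \<in> l2 \<Longrightarrow> (cmod (c n))\<^sup>2 \<le> l2_sqnorm c"
  unfolding l2_sqnorm_def mem_l2_iff using sum_le_suminf[of "\<lambda>n. (cmod (c n))\<^sup>2" "{n}"] by auto

lemma cmod_diff_sq_le: "(cmod (a - b))\<^sup>2 \<le> 2 * (cmod a)\<^sup>2 + 2 * (cmod b)\<^sup>2"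
proof -
  have "(cmod (a - b))\<^sup>2 \<le> (cmod a + cmod b)\<^sup>2"
    by (simp add: power_mono norm_triangle_ineq4)
  also have "\<dots> \<le> 2 * (cmod a)\<^sup>2 + 2 * (cmod b)\<^sup>2"
    using zero_le_power2[of "cmod a - cmod b"] unfolding power2_sum power2_diff by linarith
  finally show ?thesis .
qed

lemma l2_diff: "a \<in> l2 \<Longrightarrow> b \<in> l2 \<Longrightarrow> (\<lambda>n. a n - b n) \<in> l2"
  unfolding mem_l2_iff
  by (rule summable_comparison_test[where g="\<lambda>n. 2 * (cmod (a n))\<^sup>2 + 2 * (cmod (b n))\<^sup>2"])
     (auto intro: summable_add summable_mult cmod_diff_sq_le)

lemma l2_add: "a \<in> l2 \<Longrightarrow> b \<in> l2 \<Longrightarrow> (\<lambda>n. a n + b n) \<in> l2"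
  using l2_diff[of a "\<lambda>n. - b n"] by (simp add: mem_l2_iff)

lemma l2_mult: "a \<in> l2 \<Longrightarrow> (\<lambda>n. k * a n) \<in> l2"
  unfolding mem_l2_iff by (simp add: norm_mult power_mult_distrib summable_mult)

lemma l2_indicator: "(\<lambda>n. if n = s then 1 else 0) \<in> l2"
  unfolding mem_l2_iff by (rule summable_finite[of "{s}"]) auto

lemma l2_sum: "finite E \<Longrightarrow> E \<subseteq> l2 \<Longrightarrow> (\<lambda>n. \<Sum>e\<in>E. \<alpha> e * e n) \<in> l2"
proof (induction E rule: finite_induct)
  case empty
  show ?case by (simp add: mem_l2_iff)
next
  case (insert x F)
  thus ?case using l2_add[OF l2_mult[of x "\<alpha> x"], of "\<lambda>n. \<Sum>e\<in>F. \<alpha> e * e n"] by simp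
qed

lemma summable_cmod_mult: "a \<in> l2 \<Longrightarrow> b \<in> l2 \<Longrightarrow> summable (\<lambda>n. cmod (a n) * cmod (b n))"
  unfolding mem_l2_iff
proof (rule summable_comparison_test[where g="\<lambda>n. ((cmod (a n))\<^sup>2 + (cmod (b n))\<^sup>2) / 2"])
  show "\<exists>N. \<forall>n\<ge>N. norm (cmod (a n) * cmod (b n)) \<le> ((cmod (a n))\<^sup>2 + (cmod (b n))\<^sup>2) / 2"
    using sum_squares_ge_zero[of "cmod (a _) - cmod (b _)" 0]
    by (simp add: abs_mult power2_eq_square algebra_simps)
qed (intro summable_divide summable_add; assumption)+

lemma summable_l2inner: "a \<in> l2 \<Longrightarrow> b \<in> l2 \<Longrightarrow> summable (\<lambda>n. a n * cnj (b n))"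
  by (rule summable_norm_cancel) (simp add: norm_mult summable_cmod_mult)

lemma l2inner_self: "a \<in> l2 \<Longrightarrow> l2inner a a = complex_of_real (l2_sqnorm a)"
  unfolding l2inner_def l2_sqnorm_def mem_l2_iff
  by (simp add: complex_norm_square[symmetric] suminf_of_real)

lemma l2inner_commute: "a \<in> l2 \<Longrightarrow> b \<in> l2 \<Longrightarrow> l2inner b a = cnj (l2inner a b)"
proof -
  assume a: "a \<in> l2" and b: "b \<in> l2"
  have "(\<lambda>n. cnj (a n * cnj (b n))) sums cnj (l2inner a b)"
    unfolding sums_cnj l2inner_def using summable_l2inner[OF a b] by (rule summable_sums)
  hence "(\<lambda>n. b n * cnj (a n)) sums cnj (l2inner a b)"
    by (simp add: mult.commute)
  thus ?thesis unfolding l2inner_def by (rule sums_unique[symmetric])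
qed

lemma l2inner_diff_left: "a \<in> l2 \<Longrightarrow> b \<in> l2 \<Longrightarrow> c \<in> l2 \<Longrightarrow>
    l2inner (\<lambda>n. a n - b n) c = l2inner a c - l2inner b c"
  unfolding l2inner_def by (simp add: left_diff_distrib suminf_diff summable_l2inner)

lemma l2inner_diff_right: "a \<in> l2 \<Longrightarrow> b \<in> l2 \<Longrightarrow> c \<in> l2 \<Longrightarrow>
    l2inner a (\<lambda>n. b n - c n) = l2inner a b - l2inner a c"
  unfolding l2inner_def by (simp add: right_diff_distrib suminf_diff summable_l2inner)

lemma l2inner_mult_left: "a \<in> l2 \<Longrightarrow> b \<in> l2 \<Longrightarrow> l2inner (\<lambda>n. k * a n) b = k * l2inner a b"
  unfolding l2inner_def using summable_l2inner[of a b]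
  by (simp add: suminf_mult mult.assoc)

lemma l2inner_mult_right: "a \<in> l2 \<Longrightarrow> b \<in> l2 \<Longrightarrow> l2inner a (\<lambda>n. k * b n) = cnj k * l2inner a b"
  unfolding l2inner_def using summable_l2inner[of a b]
  by (simp add: suminf_mult algebra_simps)

lemma l2inner_sum_right: "finite E \<Longrightarrow> E \<subseteq> l2 \<Longrightarrow> a \<in> l2 \<Longrightarrow>
    l2inner a (\<lambda>n. \<Sum>e\<in>E. \<alpha> e * e n) = (\<Sum>e\<in>E. cnj (\<alpha> e) * l2inner a e)"
proof -
  assume E: "finite E" "E \<subseteq> l2" and a: "a \<in> l2"
  have "l2inner a (\<lambda>n. \<Sum>e\<in>E. \<alpha> e * e n) = (\<Sum>n. \<Sum>e\<in>E. cnj (\<alpha> e) * (a n * cnj (e n)))"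
    unfolding l2inner_def by (simp add: sum_distrib_left algebra_simps)
  also have "\<dots> = (\<Sum>e\<in>E. \<Sum>n. cnj (\<alpha> e) * (a n * cnj (e n)))"
    using E a by (intro suminf_sum summable_mult summable_l2inner) auto
  also have "\<dots> = (\<Sum>e\<in>E. cnj (\<alpha> e) * l2inner a e)"
    unfolding l2inner_def using E a by (intro sum.cong refl suminf_mult summable_l2inner) auto
  finally show ?thesis .
qed

lemma l2inner_Cauchy_Schwarz:
  assumes a: "a \<in> l2" and b: "b \<in> l2"
  shows "cmod (l2inner a b) \<le> l2norm a * l2norm b"
proof -
  have "cmod (l2inner a b) \<le> (\<Sum>n. cmod (a n) * cmod (b n))"
    unfolding l2inner_def by (rule norm_suminf_le) (auto simp: norm_mult summable_cmod_mult a b)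
  also have "\<dots> \<le> l2norm a * l2norm b"
  proof (rule suminf_le_const[OF summable_cmod_mult[OF a b]])
    fix N
    have "(\<Sum>n<N. cmod (a n) * cmod (b n))\<^sup>2 \<le> (\<Sum>n<N. (cmod (a n))\<^sup>2) * (\<Sum>n<N. (cmod (b n))\<^sup>2)"
      by (rule Cauchy_Schwarz_ineq_sum)
    also have "\<dots> \<le> l2_sqnorm a * l2_sqnorm b"
      unfolding l2_sqnorm_def using a b unfolding mem_l2_iff
      by (intro mult_mono sum_le_suminf sum_nonneg) (auto intro: suminf_nonneg)
    finally show "(\<Sum>n<N. cmod (a n) * cmod (b n)) \<le> l2norm a * l2norm b"
      unfolding l2norm_eq_sqrt_sqnorm real_sqrt_mult[symmetric] by (rule real_le_rsqrt)
  qed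
  finally show ?thesis .
qed

lemma l2_sqnorm_diff_le:
  assumes a: "a \<in> l2" and b: "b \<in> l2" and y: "y \<in> l2"
  shows "l2_sqnorm (\<lambda>n. a n - b n) \<le> 2 * l2_sqnorm (\<lambda>n. a n - y n) + 2 * l2_sqnorm (\<lambda>n. b n - y n)"
proof -
  have s: "summable (\<lambda>n. (cmod (a n - y n))\<^sup>2)" "summable (\<lambda>n. (cmod (b n - y n))\<^sup>2)"
    "summable (\<lambda>n. (cmod (a n - b n))\<^sup>2)"
    using l2_diff[OF a y] l2_diff[OF b y] l2_diff[OF a b] by (simp_all add: mem_l2_iff)
  have "l2_sqnorm (\<lambda>n. a n - b n) \<le> (\<Sum>n. 2 * (cmod (a n - y n))\<^sup>2 + 2 * (cmod (b n - y n))\<^sup>2)"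
    unfolding l2_sqnorm_def
  proof (intro suminf_le summable_add summable_mult s)
    show "(cmod (a n - b n))\<^sup>2 \<le> 2 * (cmod (a n - y n))\<^sup>2 + 2 * (cmod (b n - y n))\<^sup>2" for n
      using cmod_diff_sq_le[of "a n - y n" "b n - y n"] by simp
  qed
  also have "\<dots> = 2 * l2_sqnorm (\<lambda>n. a n - y n) + 2 * l2_sqnorm (\<lambda>n. b n - y n)"
    unfolding l2_sqnorm_def using s by (simp add: suminf_add[symmetric] summable_mult suminf_mult)
  finally show ?thesis .
qed

lemma l2_sqnorm_add_real_mult:
  assumes a: "a \<in> l2" and b: "b \<in> l2"
  shows "l2_sqnorm (\<lambda>n. a n + complex_of_real t * b n)
    = l2_sqnorm a + 2 * t * Re (l2inner b a) + t\<^sup>2 * l2_sqnorm b"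
proof -
  have sa: "summable (\<lambda>n. (cmod (a n))\<^sup>2)" and sb: "summable (\<lambda>n. (cmod (b n))\<^sup>2)"
    using a b by (auto simp: mem_l2_iff)
  have sr: "summable (\<lambda>n. Re (b n * cnj (a n)))"
    using summable_Re[OF summable_l2inner[OF b a]] .
  have pointwise: "(cmod (a n + complex_of_real t * b n))\<^sup>2
      = (cmod (a n))\<^sup>2 + (2 * t * Re (b n * cnj (a n)) + t\<^sup>2 * (cmod (b n))\<^sup>2)" for n
    by (simp only: cmod_power2) (simp add: power2_eq_square algebra_simps)
  have "l2_sqnorm (\<lambda>n. a n + complex_of_real t * b n)
      = l2_sqnorm a + ((\<Sum>n. 2 * t * Re (b n * cnj (a n))) + (\<Sum>n. t\<^sup>2 * (cmod (b n))\<^sup>2))"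
    unfolding l2_sqnorm_def pointwise using sa sb sr
    by (simp add: suminf_add[symmetric] summable_add summable_mult)
  also have "(\<Sum>n. 2 * t * Re (b n * cnj (a n))) = 2 * t * Re (l2inner b a)"
    unfolding l2inner_def using sr summable_l2inner[OF b a] by (simp add: suminf_mult Re_suminf)
  also have "(\<Sum>n. t\<^sup>2 * (cmod (b n))\<^sup>2) = t\<^sup>2 * l2_sqnorm b"
    unfolding l2_sqnorm_def using sb by (simp add: suminf_mult)
  finally show ?thesis by simp
qed

lemma l2_sqnorm_parallelogram:
  assumes a: "a \<in> l2" and b: "b \<in> l2"
  shows "l2_sqnorm (\<lambda>n. a n - b n)
    = 2 * l2_sqnorm a + 2 * l2_sqnorm b - 4 * l2_sqnorm (\<lambda>n. (a n + b n) / 2)"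
proof -
  have sa: "summable (\<lambda>n. (cmod (a n))\<^sup>2)" and sb: "summable (\<lambda>n. (cmod (b n))\<^sup>2)"
    using a b by (auto simp: mem_l2_iff)
  have sm: "summable (\<lambda>n. (cmod ((a n + b n) / 2))\<^sup>2)"
    using l2_mult[OF l2_add[OF a b], of "1/2"] by (simp add: mem_l2_iff)
  have pointwise: "(cmod (a n - b n))\<^sup>2
      = 2 * (cmod (a n))\<^sup>2 + 2 * (cmod (b n))\<^sup>2 - 4 * (cmod ((a n + b n) / 2))\<^sup>2" for n
    by (simp only: cmod_power2) (simp add: power2_eq_square field_simps)
  show ?thesis
    unfolding l2_sqnorm_def pointwise using sa sb sm
    by (simp add: suminf_diff[symmetric] suminf_add[symmetric] summable_add summable_mult suminf_mult)
qed

section \<open>Gram--Schmidt orthonormalisation\<close>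

definition l2_orth :: "(nat \<Rightarrow> complex) set \<Rightarrow> (nat \<Rightarrow> complex) set" where
  "l2_orth A = {c \<in> l2. \<forall>a\<in>A. l2inner a c = 0}"

definition l2_orthonormal :: "(nat \<Rightarrow> complex) set \<Rightarrow> bool" where
  "l2_orthonormal E \<longleftrightarrow> E \<subseteq> l2 \<and> (\<forall>e\<in>E. l2inner e e = 1) \<and>
     (\<forall>e\<in>E. \<forall>e'\<in>E. e \<noteq> e' \<longrightarrow> l2inner e e' = 0)"

definition l2_normalize :: "(nat \<Rightarrow> complex) \<Rightarrow> nat \<Rightarrow> complex" where
  "l2_normalize w = (\<lambda>n. complex_of_real (1 / l2norm w) * w n)"

definition orth_residual :: "(nat \<Rightarrow> complex) set \<Rightarrow> (nat \<Rightarrow> complex) \<Rightarrow> nat \<Rightarrow> complex" where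
  "orth_residual E v = (\<lambda>n. v n - (\<Sum>e\<in>E. l2inner v e * e n))"

fun gram_schmidt :: "(nat \<Rightarrow> complex) list \<Rightarrow> (nat \<Rightarrow> complex) list" where
  "gram_schmidt [] = []"
| "gram_schmidt (v # vs) =
     l2_normalize (orth_residual (set (gram_schmidt vs)) v) # gram_schmidt vs"

text \<open>Echelon form: each vector has a coordinate equal to \<open>1\<close> at which all later vectors
  vanish. This is what keeps the Gram--Schmidt residuals away from zero.\<close>
fun echelon :: "(nat \<Rightarrow> complex) list \<Rightarrow> bool" where
  "echelon [] = True"
| "echelon (v # vs) = ((\<exists>s. v s = 1 \<and> (\<forall>u\<in>set vs. u s = 0)) \<and> echelon vs)"

lemma l2_orth_diff:
  "A \<subseteq> l2 \<Longrightarrow> c \<in> l2_orth A \<Longrightarrow> d \<in> l2_orth A \<Longrightarrow> (\<lambda>n. c n - d n) \<in> l2_orth A"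
  unfolding l2_orth_def by (auto simp: l2_diff l2inner_diff_right subset_iff)

lemma l2_orth_mult: "A \<subseteq> l2 \<Longrightarrow> c \<in> l2_orth A \<Longrightarrow> (\<lambda>n. k * c n) \<in> l2_orth A"
  unfolding l2_orth_def by (auto simp: l2_mult l2inner_mult_right subset_iff)

lemma l2_orth_sum:
  assumes "A \<subseteq> l2" "finite E" "E \<subseteq> l2_orth A"
  shows "(\<lambda>n. \<Sum>e\<in>E. \<alpha> e * e n) \<in> l2_orth A"
proof -
  have "E \<subseteq> l2" using assms(3) by (auto simp: l2_orth_def)
  thus ?thesis using assms
    by (auto simp: l2_orth_def l2_sum l2inner_sum_right subset_iff intro!: sum.neutral)
qed

lemma orth_residual_l2: "finite E \<Longrightarrow> E \<subseteq> l2 \<Longrightarrow> v \<in> l2 \<Longrightarrow> orth_residual E v \<in> l2"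
  unfolding orth_residual_def by (intro l2_diff l2_sum)

lemma orth_residual_orth:
  assumes E: "finite E" "l2_orthonormal E" and v: "v \<in> l2" and e': "e' \<in> E"
  shows "l2inner (orth_residual E v) e' = 0"
proof -
  have El2: "E \<subseteq> l2" and e'l2: "e' \<in> l2" using E e' by (auto simp: l2_orthonormal_def)
  have "l2inner e' (\<lambda>n. \<Sum>e\<in>E. l2inner v e * e n) = (\<Sum>e\<in>E. cnj (l2inner v e) * l2inner e' e)"
    by (rule l2inner_sum_right[OF E(1) El2 e'l2])
  also have "\<dots> = (\<Sum>e\<in>E. cnj (l2inner v e) * (if e = e' then 1 else 0))"
    using E(2) e' by (intro sum.cong) (auto simp: l2_orthonormal_def)
  also have "\<dots> = cnj (l2inner v e')"
    using E(1) e' by (simp add: if_distrib sum.delta' cong: if_cong)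
  finally have "l2inner (\<lambda>n. \<Sum>e\<in>E. l2inner v e * e n) e' = l2inner v e'"
    using l2inner_commute[OF e'l2 l2_sum[OF E(1) El2]] by simp
  thus ?thesis
    unfolding orth_residual_def by (simp add: l2inner_diff_left[OF v l2_sum[OF E(1) El2] e'l2])
qed

lemma l2inner_normalize_self:
  assumes w: "w \<in> l2" and pos: "0 < l2_sqnorm w"
  shows "l2inner (l2_normalize w) (l2_normalize w) = 1"
proof -
  have "(1 / l2norm w) * (1 / l2norm w) * l2_sqnorm w = 1"
    using pos by (simp add: l2norm_eq_sqrt_sqnorm field_simps)
  hence "complex_of_real (1 / l2norm w) * cnj (complex_of_real (1 / l2norm w))
      * complex_of_real (l2_sqnorm w) = 1"
    by (metis complex_cnj_complex_of_real of_real_1 of_real_mult)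
  thus ?thesis unfolding l2_normalize_def
    by (simp only: l2inner_mult_left l2inner_mult_right l2_mult l2inner_self w mult.assoc)
qed

lemma l2_orthonormal_insert:
  assumes E: "l2_orthonormal E" and e0: "e0 \<in> l2" "l2inner e0 e0 = 1"
    and orth: "\<And>e. e \<in> E \<Longrightarrow> l2inner e0 e = 0"
  shows "l2_orthonormal (insert e0 E)" and "e0 \<notin> E"
proof -
  have "l2inner e e0 = 0" if "e \<in> E" for e
    using l2inner_commute[OF e0(1), of e] orth[OF that] E that by (auto simp: l2_orthonormal_def)
  thus "l2_orthonormal (insert e0 E)"
    using E e0 orth unfolding l2_orthonormal_def by auto
  show "e0 \<notin> E" using orth e0(2) by force
qed

lemma gram_schmidt_vanishing:
  "(\<forall>u\<in>set vs. u t = 0) \<Longrightarrow> (\<forall>e\<in>set (gram_schmidt vs). e t = 0)"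
  by (induction vs) (simp_all add: l2_normalize_def orth_residual_def sum.neutral)

lemma gram_schmidt_orthonormal:
  assumes A: "A \<subseteq> l2"
  shows "echelon vs \<Longrightarrow> set vs \<subseteq> l2_orth A \<Longrightarrow>
    set (gram_schmidt vs) \<subseteq> l2_orth A \<and> l2_orthonormal (set (gram_schmidt vs)) \<and>
    card (set (gram_schmidt vs)) = length vs"
proof (induction vs)
  case Nil
  show ?case by (simp add: l2_orthonormal_def)
next
  case (Cons v vs)
  define E where "E = set (gram_schmidt vs)"
  define w where "w = orth_residual E v"
  have IH: "E \<subseteq> l2_orth A" "l2_orthonormal E" "card E = length vs"
    using Cons by (auto simp: E_def)
  have v: "v \<in> l2_orth A" using Cons.prems by simp
  have El2: "E \<subseteq> l2" and vl2: "v \<in> l2" and fE: "finite E"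
    using IH(1) v by (auto simp: l2_orth_def E_def)
  have wl2: "w \<in> l2" unfolding w_def by (rule orth_residual_l2[OF fE El2 vl2])
  have wA: "w \<in> l2_orth A"
    unfolding w_def orth_residual_def by (intro l2_orth_diff l2_orth_sum A v fE IH(1))
  obtain s where s: "v s = 1" "\<forall>u\<in>set vs. u s = 0" using Cons.prems by auto
  have "w s = 1"
    using gram_schmidt_vanishing[OF s(2)] s(1) by (simp add: w_def E_def orth_residual_def sum.neutral)
  hence "0 < l2_sqnorm w" using l2_sqnorm_ge_coordinate[OF wl2, of s] by simp
  hence e0: "l2inner (l2_normalize w) (l2_normalize w) = 1"
    by (rule l2inner_normalize_self[OF wl2])
  have e0l2: "l2_normalize w \<in> l2" unfolding l2_normalize_def by (rule l2_mult[OF wl2])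
  have "l2inner (l2_normalize w) e = 0" if "e \<in> E" for e
    using orth_residual_orth[OF fE IH(2) vl2 that] El2 that
    unfolding l2_normalize_def w_def
    by (subst l2inner_mult_left) (auto simp: orth_residual_l2[OF fE El2 vl2])
  note insert = l2_orthonormal_insert[OF IH(2) e0l2 e0 this]
  have "l2_normalize w \<in> l2_orth A"
    unfolding l2_normalize_def by (rule l2_orth_mult[OF A wA])
  thus ?case
    using IH insert fE by (simp add: E_def[symmetric] w_def[symmetric])
qed

section \<open>Compact operators and finite nets\<close>

lemma separated_sequence:
  assumes step: "\<And>F. finite F \<Longrightarrow> F \<subseteq> B \<Longrightarrow> \<exists>c\<in>B. \<forall>y\<in>F. P c y"
  shows "\<exists>X :: nat \<Rightarrow> 'a. (\<forall>n. X n \<in> B) \<and> (\<forall>m n. m < n \<longrightarrow> P (X n) (X m))"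
proof -
  define next_point where "next_point F = (SOME c. c \<in> B \<and> (\<forall>y\<in>F. P c y))" for F
  have next_point: "next_point F \<in> B \<and> (\<forall>y\<in>F. P (next_point F) y)"
    if "finite F" "F \<subseteq> B" for F
    using someI_ex[OF step[OF that, unfolded Bex_def]] unfolding next_point_def .
  define prefix where "prefix = rec_nat [] (\<lambda>_ l. next_point (set l) # l)"
  define X where "X n = next_point (set (prefix n))" for n
  have prefix_Suc: "prefix (Suc n) = X n # prefix n" for n
    by (simp add: prefix_def X_def)
  have prefix: "set (prefix n) \<subseteq> B \<and> set (prefix n) = X ` {..<n}" for n
  proof (induction n)
    case 0
    show ?case by (simp add: prefix_def)
  next
    case (Suc n)
    have "X n \<in> B" unfolding X_def using next_point[OF finite_set] Suc.IH by blast
    thus ?case using Suc.IH by (auto simp: prefix_Suc lessThan_Suc)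
  qed
  have "X n \<in> B" for n unfolding X_def using next_point[OF finite_set] prefix by blast
  moreover have "P (X n) (X m)" if "m < n" for m n
    using next_point[OF finite_set, of "prefix n"] prefix[of n] that unfolding X_def by blast
  ultimately show ?thesis by blast
qed

lemma l2_compact_image_not_separated:
  fixes X :: "nat \<Rightarrow> nat \<Rightarrow> complex"
  assumes T: "l2_compact T" and X: "\<And>n. X n \<in> l2" "\<And>n. l2_sqnorm (X n) \<le> 1"
  shows "\<exists>m n. m < n \<and> l2_sqnorm (\<lambda>k. T (X n) k - T (X m) k) < 1/2"
proof -
  have TXl2: "T (X n) \<in> l2" for n using T X(1) unfolding l2_compact_def by blast
  have "l2norm (X n) \<le> 1" for n using X(2) unfolding l2norm_eq_sqrt_sqnorm by auto
  then obtain r L where r: "strict_mono r" and L: "L \<in> l2"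
    and lim: "(\<lambda>k. l2norm (T (X (r k)) - L)) \<longlonglongrightarrow> 0"
    using T X(1) unfolding l2_compact_def by blast
  obtain k0 where k0: "\<And>k. k \<ge> k0 \<Longrightarrow> l2norm (T (X (r k)) - L) < 1/4"
    using order_tendstoD(2)[OF lim, of "1/4"] unfolding eventually_sequentially by auto
  have close: "l2_sqnorm (\<lambda>n. T (X (r k)) n - L n) < 1/16" if "k \<ge> k0" for k
  proof -
    have "sqrt (l2_sqnorm (\<lambda>n. T (X (r k)) n - L n)) < sqrt (1/16)"
      using k0[OF that] by (simp add: l2norm_eq_sqrt_sqnorm fun_diff_def real_sqrt_divide)
    thus ?thesis by simp
  qed
  have "l2_sqnorm (\<lambda>n. T (X (r (Suc k0))) n - T (X (r k0)) n)
      \<le> 2 * l2_sqnorm (\<lambda>n. T (X (r (Suc k0))) n - L n) + 2 * l2_sqnorm (\<lambda>n. T (X (r k0)) n - L n)"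
    by (rule l2_sqnorm_diff_le[OF TXl2 TXl2 L])
  also have "\<dots> < 1/2" using close[of "Suc k0"] close[of k0] by simp
  finally show ?thesis using r by (auto simp: strict_mono_def)
qed

lemma l2_compact_expanding_finite_net:
  assumes T: "l2_compact T" and K: "K \<subseteq> l2"
    and expanding: "\<And>c c'. c \<in> K \<Longrightarrow> c' \<in> K \<Longrightarrow>
      l2_sqnorm (\<lambda>n. c n - c' n) \<le> l2_sqnorm (\<lambda>n. T c n - T c' n)"
  shows "\<exists>Y. finite Y \<and> Y \<subseteq> l2 \<and>
    (\<forall>c\<in>K. l2_sqnorm c \<le> 1 \<longrightarrow> (\<exists>y\<in>Y. l2_sqnorm (\<lambda>n. c n - y n) < 1/2))"
proof (rule ccontr)
  define B where "B = {c\<in>K. l2_sqnorm c \<le> 1}"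
  assume no_net: "\<not> ?thesis"
  have "\<exists>c\<in>B. \<forall>y\<in>F. 1/2 \<le> l2_sqnorm (\<lambda>n. c n - y n)" if "finite F" "F \<subseteq> B" for F
  proof -
    have "F \<subseteq> l2" using that K B_def by auto
    hence "\<not> (\<forall>c\<in>K. l2_sqnorm c \<le> 1 \<longrightarrow> (\<exists>y\<in>F. l2_sqnorm (\<lambda>n. c n - y n) < 1/2))"
      using no_net that(1) by blast
    thus ?thesis by (auto simp: B_def not_less)
  qed
  from separated_sequence[of B "\<lambda>c y. 1/2 \<le> l2_sqnorm (\<lambda>n. c n - y n)", OF this]
  obtain X :: "nat \<Rightarrow> nat \<Rightarrow> complex" where XB: "\<And>n. X n \<in> B"
    and sep: "\<And>m n. m < n \<Longrightarrow> 1/2 \<le> l2_sqnorm (\<lambda>k. X n k - X m k)"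
    by blast
  have "X n \<in> l2" "l2_sqnorm (X n) \<le> 1" for n using XB K B_def by auto
  then obtain m n where "m < n" "l2_sqnorm (\<lambda>k. T (X n) k - T (X m) k) < 1/2"
    using l2_compact_image_not_separated[OF T] by blast
  moreover have "l2_sqnorm (\<lambda>k. X n k - X m k) \<le> l2_sqnorm (\<lambda>k. T (X n) k - T (X m) k)"
    using expanding XB B_def by auto
  ultimately show False using sep by fastforce
qed

lemma l2_orthonormal_card_le_net:
  assumes Y: "finite Y" "Y \<subseteq> l2"
    and net: "\<forall>c\<in>K. l2_sqnorm c \<le> 1 \<longrightarrow> (\<exists>y\<in>Y. l2_sqnorm (\<lambda>n. c n - y n) < 1/2)"
    and E: "E \<subseteq> K" "l2_orthonormal E"
  shows "card E \<le> card Y"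
proof -
  have El2: "E \<subseteq> l2" using E(2) by (simp add: l2_orthonormal_def)
  have "\<forall>e\<in>E. \<exists>y. y \<in> Y \<and> l2_sqnorm (\<lambda>n. e n - y n) < 1/2"
  proof
    fix e assume e: "e \<in> E"
    have "l2_sqnorm e = 1"
      using E(2) e l2inner_self[of e] by (auto simp: l2_orthonormal_def)
    moreover have "e \<in> K" using E(1) e by blast
    ultimately show "\<exists>y. y \<in> Y \<and> l2_sqnorm (\<lambda>n. e n - y n) < 1/2" using net by auto
  qed
  then obtain near where near: "\<And>e. e \<in> E \<Longrightarrow> near e \<in> Y \<and> l2_sqnorm (\<lambda>n. e n - near e n) < 1/2"
    by (auto dest!: bchoice)
  have "inj_on near E"
  proof (rule inj_onI, rule ccontr)
    fix e e' assume e: "e \<in> E" and e': "e' \<in> E" and eq: "near e = near e'" and ne: "e \<noteq> e'"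
    have el2: "e \<in> l2" "e' \<in> l2" using El2 e e' by auto
    have "l2_sqnorm (\<lambda>n. e n - e' n)
        \<le> 2 * l2_sqnorm (\<lambda>n. e n - near e n) + 2 * l2_sqnorm (\<lambda>n. e' n - near e n)"
      using near[OF e] Y(2) by (intro l2_sqnorm_diff_le el2) auto
    also have "\<dots> < 2" using near[OF e] near[OF e'] eq by simp
    finally have "l2_sqnorm (\<lambda>n. e n - e' n) < 2" .
    moreover have "l2inner (\<lambda>n. e n - e' n) (\<lambda>n. e n - e' n) = 2"
      using E(2) e e' ne el2
      by (simp add: l2inner_diff_left l2inner_diff_right l2_diff l2_orthonormal_def)
    hence "complex_of_real (l2_sqnorm (\<lambda>n. e n - e' n)) = complex_of_real 2"
      using l2inner_self[OF l2_diff[OF el2]] by simp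
    hence "l2_sqnorm (\<lambda>n. e n - e' n) = 2" by (simp only: of_real_eq_iff)
    ultimately show False by simp
  qed
  moreover have "near ` E \<subseteq> Y" using near by auto
  ultimately show ?thesis using Y(1) by (rule card_inj_on_le)
qed

section \<open>Riesz representation for a frame\<close>

lemma cinner_diff_left: "cinner (x - y) z = cinner x z - cinner y z"
  using cinner_add_left[of "x - y" y z] by simp

lemma cinner_zero_left: "cinner 0 z = 0"
  using cinner_diff_left[of 0 0 z] by simp

lemma cinner_zero_right: "cinner z 0 = 0"
  using cinner_commute[of z 0] by (simp add: cinner_zero_left)

definition analysis_on :: "nat set \<Rightarrow> (nat \<Rightarrow> 'a::complex_hilbert) \<Rightarrow> 'a \<Rightarrow> nat \<Rightarrow> complex" where
  "analysis_on I h x = (\<lambda>n. if n \<in> I then cinner x (h n) else 0)"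

lemma analysis_on_UNIV: "analysis_on UNIV h = analysis_op h"
  by (simp add: analysis_on_def analysis_op_def fun_eq_iff)

lemma analysis_on_add: "analysis_on I h (x + y) = (\<lambda>n. analysis_on I h x n + analysis_on I h y n)"
  by (simp add: analysis_on_def fun_eq_iff cinner_add_left)

lemma analysis_on_diff: "analysis_on I h (x - y) = (\<lambda>n. analysis_on I h x n - analysis_on I h y n)"
  by (simp add: analysis_on_def fun_eq_iff cinner_diff_left)

lemma analysis_on_scaleC: "analysis_on I h (a *\<^sub>C x) = (\<lambda>n. a * analysis_on I h x n)"
  by (simp add: analysis_on_def fun_eq_iff cinner_scaleC_left)

lemma frame_on_analysis_on:
  assumes "frame_on I h"
  obtains A B where "0 < A" "A \<le> B" "\<And>x. analysis_on I h x \<in> l2"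
    "\<And>x. A * (hnorm x)\<^sup>2 \<le> l2_sqnorm (analysis_on I h x)"
    "\<And>x. l2_sqnorm (analysis_on I h x) \<le> B * (hnorm x)\<^sup>2"
proof -
  have sq: "(\<lambda>n. (cmod (analysis_on I h x n))\<^sup>2)
      = (\<lambda>n. if n \<in> I then (cmod (cinner x (h n)))\<^sup>2 else 0)" for x
    by (simp add: analysis_on_def fun_eq_iff)
  from assms obtain A B where "0 < A" "A \<le> B" and bounds: "\<forall>x.
      summable (\<lambda>n. if n \<in> I then (cmod (cinner x (h n)))\<^sup>2 else 0) \<and>
      A * (hnorm x)\<^sup>2 \<le> (\<Sum>n. if n \<in> I then (cmod (cinner x (h n)))\<^sup>2 else 0) \<and>
      (\<Sum>n. if n \<in> I then (cmod (cinner x (h n)))\<^sup>2 else 0) \<le> B * (hnorm x)\<^sup>2"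
    unfolding frame_on_def by blast
  show ?thesis
    by (rule that[OF \<open>0 < A\<close> \<open>A \<le> B\<close>]) (use bounds in \<open>simp_all add: mem_l2_iff l2_sqnorm_def sq\<close>)
qed

lemma real_sq_le_of_quadratic_lower_bound:
  fixes R q e :: real
  assumes q: "0 \<le> q" and lower: "\<And>t. -e < 2 * t * R + t\<^sup>2 * q"
  shows "R\<^sup>2 \<le> q * e"
proof (cases "q = 0")
  case True
  have "R = 0"
  proof (rule ccontr)
    assume "R \<noteq> 0"
    hence "2 * (-e / (2 * R)) * R + (-e / (2 * R))\<^sup>2 * q = -e" using True by (simp add: field_simps)
    thus False using lower[of "-e / (2 * R)"] by simp
  qed
  thus ?thesis using True by simp
next
  case False
  hence "0 < q" using q by simp
  moreover have "2 * (-R / q) * R + (-R / q)\<^sup>2 * q = - (R\<^sup>2 / q)"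
    using \<open>0 < q\<close> by (simp add: field_simps power2_eq_square)
  ultimately have "R\<^sup>2 / q < e" using lower[of "-R / q"] by simp
  thus ?thesis using \<open>0 < q\<close> by (simp add: field_simps)
qed

text \<open>Riesz representation of the functional \<open>x \<mapsto> \<langle>x, y\<rangle>\<close> with respect to the inner
  product \<open>\<langle>u x, u z\<rangle>\<^sub>\<ell>\<^sub>2\<close> induced by a bounded-below analysis operator \<open>u\<close>. The
  representing vector is the minimiser of the energy \<open>\<parallel>u z\<parallel>\<^sup>2 - 2 Re \<langle>z, y\<rangle>\<close>.\<close>
locale analysis_riesz =
  fixes I :: "nat set" and h :: "nat \<Rightarrow> 'a::complex_hilbert" and y :: 'a and A B C :: real
  assumes A_pos: "0 < A" and C_pos: "0 < C"
    and analysis_l2: "analysis_on I h x \<in> l2"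
    and lower_bound: "A * (hnorm x)\<^sup>2 \<le> l2_sqnorm (analysis_on I h x)"
    and upper_bound: "l2_sqnorm (analysis_on I h x) \<le> B * (hnorm x)\<^sup>2"
    and functional_bound: "(cmod (cinner x y))\<^sup>2 \<le> C * (hnorm x)\<^sup>2"
begin

abbreviation u where "u \<equiv> analysis_on I h"

definition energy :: "'a \<Rightarrow> real" where
  "energy z = l2_sqnorm (u z) - 2 * Re (cinner z y)"

lemma energy_lower_bound: "- (C / A) \<le> energy z"
proof -
  define c where "c = cmod (cinner z y)"
  have "0 \<le> (A / C) * (c - C / A)\<^sup>2" using A_pos C_pos by simp
  also have "(A / C) * (c - C / A)\<^sup>2 = (A / C) * c\<^sup>2 - 2 * c + C / A"
    using A_pos C_pos by (simp add: field_simps power2_eq_square)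
  finally have "2 * c \<le> (A / C) * c\<^sup>2 + C / A" by simp
  moreover have "(A / C) * c\<^sup>2 \<le> (A / C) * (C * (hnorm z)\<^sup>2)"
    unfolding c_def using functional_bound A_pos C_pos by (intro mult_left_mono) auto
  moreover have "(A / C) * (C * (hnorm z)\<^sup>2) \<le> l2_sqnorm (u z)"
    using lower_bound C_pos by simp
  moreover have "Re (cinner z y) \<le> c" unfolding c_def by (rule complex_Re_le_cmod)
  ultimately show ?thesis unfolding energy_def by simp
qed

lemma energy_midpoint:
  "energy ((1/2) *\<^sub>C (v + w)) = l2_sqnorm (\<lambda>n. (u v n + u w n) / 2) - Re (cinner v y) - Re (cinner w y)"
proof -
  have "u ((1/2) *\<^sub>C (v + w)) = (\<lambda>n. (u v n + u w n) / 2)"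
    by (simp add: analysis_on_scaleC analysis_on_add)
  moreover have "2 * Re (cinner ((1/2) *\<^sub>C (v + w)) y) = Re (cinner v y) + Re (cinner w y)"
    by (simp add: cinner_scaleC_left cinner_add_left)
  ultimately show ?thesis by (simp add: energy_def)
qed

text \<open>By the parallelogram law, a minimising sequence of the energy is Cauchy.\<close>
lemma minimising_sequence_Cauchy:
  assumes min: "\<And>w. \<mu> \<le> energy w" and zs: "\<And>k. energy (zs k) < \<mu> + 1 / real (Suc k)"
  shows "\<forall>e>0. \<exists>N. \<forall>m\<ge>N. \<forall>n\<ge>N. hnorm (zs m - zs n) < e"
proof (intro allI impI)
  fix e :: real assume e: "0 < e"
  have diff: "A * (hnorm (zs m - zs n))\<^sup>2 \<le> 2 / real (Suc m) + 2 / real (Suc n)" for m n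
  proof -
    have "A * (hnorm (zs m - zs n))\<^sup>2 \<le> l2_sqnorm (u (zs m - zs n))" by (rule lower_bound)
    also have "\<dots> = 2 * energy (zs m) + 2 * energy (zs n) - 4 * energy ((1/2) *\<^sub>C (zs m + zs n))"
      unfolding analysis_on_diff l2_sqnorm_parallelogram[OF analysis_l2 analysis_l2] energy_midpoint
      by (simp add: energy_def)
    also have "\<dots> \<le> 2 / real (Suc m) + 2 / real (Suc n)"
      using zs[of m] zs[of n] min[of "(1/2) *\<^sub>C (zs m + zs n)"] by simp
    finally show ?thesis .
  qed
  obtain N where N: "4 / (A * e\<^sup>2) < real N" using reals_Archimedean2 by blast
  have "4 < A * e\<^sup>2 * real N" using N A_pos e by (simp add: field_simps)
  moreover have "0 < A * e\<^sup>2" using A_pos e by simp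
  ultimately have "4 < A * e\<^sup>2 * real (Suc N)" by (simp add: algebra_simps)
  hence "4 / real (Suc N) < A * e\<^sup>2" by (simp add: field_simps)
  show "\<exists>N. \<forall>m\<ge>N. \<forall>n\<ge>N. hnorm (zs m - zs n) < e"
  proof (intro exI allI impI)
    fix m n assume "N \<le> m" "N \<le> n"
    hence "2 / real (Suc m) + 2 / real (Suc n) \<le> 4 / real (Suc N)"
      using frac_le[of 2 2 "real (Suc N)" "real (Suc m)"] frac_le[of 2 2 "real (Suc N)" "real (Suc n)"]
      by simp
    hence "A * (hnorm (zs m - zs n))\<^sup>2 < A * e\<^sup>2"
      using diff[of m n] \<open>4 / real (Suc N) < A * e\<^sup>2\<close> by linarith
    hence "(hnorm (zs m - zs n))\<^sup>2 < e\<^sup>2" by (simp only: mult_less_cancel_left_pos[OF A_pos])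
    thus "hnorm (zs m - zs n) < e" using e by (simp add: power2_less_imp_less)
  qed
qed

lemma minimising_sequence_converges:
  "\<exists>zs z. (\<forall>k. energy (zs k) < Inf (range energy) + 1 / real (Suc k)) \<and>
    (\<lambda>k. hnorm (zs k - z)) \<longlonglongrightarrow> 0"
proof -
  have bdd: "bdd_below (range energy)" using energy_lower_bound by (intro bdd_belowI2)
  have "\<exists>z. energy z < Inf (range energy) + 1 / real (Suc k)" for k
    using cInf_lessD[of "range energy" "Inf (range energy) + 1 / real (Suc k)"] by auto
  then obtain zs where zs: "\<And>k. energy (zs k) < Inf (range energy) + 1 / real (Suc k)" by metis
  have "\<And>w. Inf (range energy) \<le> energy w" by (rule cInf_lower[OF rangeI bdd])
  from minimising_sequence_Cauchy[OF this zs]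
  have "\<forall>e>0. \<exists>N. \<forall>m\<ge>N. \<forall>n\<ge>N. sqrt (Re (cinner (zs m - zs n) (zs m - zs n))) < e"
    by (simp only: hnorm_def)
  from hilbert_complete[OF this] obtain z
    where "(\<lambda>k. sqrt (Re (cinner (zs k - z) (zs k - z)))) \<longlonglongrightarrow> 0" ..
  hence "(\<lambda>k. hnorm (zs k - z)) \<longlonglongrightarrow> 0" by (simp only: hnorm_def)
  with zs show ?thesis by blast
qed

lemma l2inner_analysis_tendsto:
  assumes "(\<lambda>k. hnorm (zs k - z)) \<longlonglongrightarrow> 0"
  shows "(\<lambda>k. l2inner (u x) (u (zs k))) \<longlonglongrightarrow> l2inner (u x) (u z)"
proof (rule LIM_zero_cancel, rule Lim_null_comparison)
  show "\<forall>\<^sub>F k in sequentially. norm (l2inner (u x) (u (zs k)) - l2inner (u x) (u z))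
      \<le> l2norm (u x) * sqrt B * hnorm (zs k - z)"
  proof (intro always_eventually allI)
    fix k
    have "l2inner (u x) (u (zs k)) - l2inner (u x) (u z) = l2inner (u x) (u (zs k - z))"
      unfolding analysis_on_diff by (rule l2inner_diff_right[OF analysis_l2 analysis_l2 analysis_l2, symmetric])
    also have "cmod \<dots> \<le> l2norm (u x) * l2norm (u (zs k - z))"
      by (rule l2inner_Cauchy_Schwarz[OF analysis_l2 analysis_l2])
    also have "\<dots> \<le> l2norm (u x) * (sqrt B * hnorm (zs k - z))"
    proof (rule mult_left_mono)
      show "l2norm (u (zs k - z)) \<le> sqrt B * hnorm (zs k - z)"
        using real_sqrt_le_mono[OF upper_bound[of "zs k - z"]] cinner_ge_zero[of "zs k - z"]
        by (simp add: l2norm_eq_sqrt_sqnorm real_sqrt_mult hnorm_def)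
    qed (simp add: l2norm_eq_sqrt_sqnorm l2_sqnorm_nonneg[OF analysis_l2])
    finally show "norm (l2inner (u x) (u (zs k)) - l2inner (u x) (u z))
        \<le> l2norm (u x) * sqrt B * hnorm (zs k - z)"
      by (simp add: mult.assoc)
  qed
  show "(\<lambda>k. l2norm (u x) * sqrt B * hnorm (zs k - z)) \<longlonglongrightarrow> 0"
    using tendsto_mult[OF tendsto_const assms, of "l2norm (u x) * sqrt B"] by simp
qed

text \<open>First variation: along \<open>zs k + t x\<close> the energy stays above its infimum, so the
  linear term \<open>R k\<close> of this quadratic in \<open>t\<close> tends to zero.\<close>
lemma minimiser_first_variation:
  assumes zs: "\<And>k. energy (zs k) < Inf (range energy) + 1 / real (Suc k)"
    and lim: "(\<lambda>k. hnorm (zs k - z)) \<longlonglongrightarrow> 0"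
  shows "Re (l2inner (u x) (u z)) = Re (cinner x y)"
proof -
  have bdd: "bdd_below (range energy)" using energy_lower_bound by (intro bdd_belowI2)
  define q where "q = l2_sqnorm (u x)"
  have q: "0 \<le> q" unfolding q_def by (rule l2_sqnorm_nonneg[OF analysis_l2])
  define R where "R k = Re (l2inner (u x) (u (zs k))) - Re (cinner x y)" for k
  have "(R k)\<^sup>2 \<le> q * (1 / real (Suc k))" for k
  proof (rule real_sq_le_of_quadratic_lower_bound[OF q])
    fix t :: real
    have "energy (zs k + complex_of_real t *\<^sub>C x) = energy (zs k) + 2 * t * R k + t\<^sup>2 * q"
      unfolding energy_def analysis_on_add analysis_on_scaleC
        l2_sqnorm_add_real_mult[OF analysis_l2 analysis_l2] R_def q_def
      by (simp add: cinner_add_left cinner_scaleC_left ring_distribs)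
    moreover have "Inf (range energy) \<le> energy (zs k + complex_of_real t *\<^sub>C x)"
      by (rule cInf_lower[OF rangeI bdd])
    ultimately show "- (1 / real (Suc k)) < 2 * t * R k + t\<^sup>2 * q" using zs[of k] by simp
  qed
  hence bound: "\<bar>R k\<bar> \<le> sqrt (q * inverse (real (Suc k)))" for k
    using real_sqrt_le_mono[of "(R k)\<^sup>2"] by (simp add: divide_inverse)
  have "R \<longlonglongrightarrow> 0"
  proof (rule Lim_null_comparison)
    show "\<forall>\<^sub>F k in sequentially. norm (R k) \<le> sqrt (q * inverse (real (Suc k)))"
      using bound by (simp add: always_eventually)
    show "(\<lambda>k. sqrt (q * inverse (real (Suc k)))) \<longlonglongrightarrow> 0"
      using tendsto_real_sqrt[OF tendsto_mult[OF tendsto_const LIMSEQ_inverse_real_of_nat, of q]] by simp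
  qed
  moreover have "R \<longlonglongrightarrow> Re (l2inner (u x) (u z)) - Re (cinner x y)"
    unfolding R_def by (intro tendsto_diff tendsto_Re l2inner_analysis_tendsto[OF lim] tendsto_const)
  ultimately have "0 = Re (l2inner (u x) (u z)) - Re (cinner x y)" by (rule LIMSEQ_unique)
  thus ?thesis by simp
qed

lemma riesz_representation: "\<exists>z. \<forall>x. l2inner (u x) (u z) = cinner x y"
proof -
  obtain zs z where zs: "\<And>k. energy (zs k) < Inf (range energy) + 1 / real (Suc k)"
    and lim: "(\<lambda>k. hnorm (zs k - z)) \<longlonglongrightarrow> 0"
    using minimising_sequence_converges by blast
  note re = minimiser_first_variation[OF zs lim]
  have "l2inner (u x) (u z) = cinner x y" for x
  proof (rule complex_eqI)
    show "Re (l2inner (u x) (u z)) = Re (cinner x y)" by (rule re)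
    have "Re (\<i> * l2inner (u x) (u z)) = Re (\<i> * cinner x y)"
      using re[of "\<i> *\<^sub>C x"] unfolding analysis_on_scaleC
      by (simp add: l2inner_mult_left analysis_l2 cinner_scaleC_left)
    thus "Im (l2inner (u x) (u z)) = Im (cinner x y)" by simp
  qed
  thus ?thesis by blast
qed

end

section \<open>Deletable index sets\<close>

lemma frame_analysis_op_l2: "frame h \<Longrightarrow> analysis_op h x \<in> l2"
  unfolding frame_def analysis_on_UNIV[symmetric] by (erule frame_on_analysis_on) blast

lemma analysis_adj_eq_zero:
  assumes "c \<in> l2_orth (range (analysis_op f))"
  shows "analysis_adj f c = 0"
  unfolding analysis_adj_def
proof (rule the_equality)
  have orth: "l2inner (analysis_op f x) c = 0" for x using assms by (simp add: l2_orth_def)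
  thus "\<forall>x. cinner x 0 = l2inner (analysis_op f x) c" by (simp add: cinner_zero_right)
  fix y assume "\<forall>x. cinner x y = l2inner (analysis_op f x) c"
  hence "cinner y y = 0" using orth by simp
  thus "y = 0" by (simp add: cinner_eq_zero_iff)
qed

lemma l2inner_indicator_right: "l2inner a (\<lambda>n. if n = s then 1 else 0) = a s"
proof -
  have "(\<lambda>n. a n * cnj (if n = s then 1 else 0)) = (\<lambda>n. if n = s then a n else 0)"
    by (simp add: fun_eq_iff)
  thus ?thesis unfolding l2inner_def using sums_single[of s a] by (simp add: sums_iff)
qed

lemma l2_sqnorm_le_diff_orth:
  assumes "b \<in> l2" "v \<in> l2" "l2inner v b = 0"
  shows "l2_sqnorm b \<le> l2_sqnorm (\<lambda>n. b n - v n)"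
  using l2_sqnorm_add_real_mult[OF assms(1,2), of "-1"] l2_sqnorm_nonneg[OF assms(2)] assms(3)
  by simp

text \<open>If deleting the indices in \<open>S\<close> leaves a frame, then every deleted index \<open>s\<close> carries a
  vector of \<open>(Ran U)\<^sup>\<bottom>\<close> that is the unit vector at \<open>s\<close> on \<open>S\<close>: it is \<open>\<delta>\<^sub>s - U\<^sub>S z\<close>, where
  \<open>z\<close> represents \<open>x \<mapsto> \<langle>x, h s\<rangle>\<close> for the inner product of the reduced frame.\<close>
lemma deleted_index_orth_vector:
  fixes h :: "nat \<Rightarrow> 'a::complex_hilbert"
  assumes frame: "frame h" and reduced: "frame_on (UNIV - S) h" and s: "s \<in> S"
  shows "\<exists>d\<in>l2_orth (range (analysis_op h)). d s = 1 \<and> (\<forall>t\<in>S. t \<noteq> s \<longrightarrow> d t = 0)"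
proof -
  define u where "u = analysis_on (UNIV - S) h"
  obtain A B where "0 < A" "A \<le> B" "\<And>x. u x \<in> l2"
    "\<And>x. A * (hnorm x)\<^sup>2 \<le> l2_sqnorm (u x)" "\<And>x. l2_sqnorm (u x) \<le> B * (hnorm x)\<^sup>2"
    using frame_on_analysis_on[OF reduced] unfolding u_def by metis
  note reduced_bounds = this
  obtain A0 B0 where "0 < A0" "A0 \<le> B0" "\<And>x. analysis_op h x \<in> l2"
    "\<And>x. l2_sqnorm (analysis_op h x) \<le> B0 * (hnorm x)\<^sup>2"
    using frame_on_analysis_on[OF frame[unfolded frame_def]] unfolding analysis_on_UNIV by metis
  note frame_bounds = this
  have "(cmod (cinner x (h s)))\<^sup>2 \<le> B0 * (hnorm x)\<^sup>2" for x
    using l2_sqnorm_ge_coordinate[OF frame_bounds(3), of x s] frame_bounds(4)[of x]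
    by (simp add: analysis_op_def)
  then interpret analysis_riesz "UNIV - S" h "h s" A B B0
    using reduced_bounds frame_bounds unfolding u_def by unfold_locales auto
  obtain z where z: "\<And>x. l2inner (u x) (u z) = cinner x (h s)"
    using riesz_representation unfolding u_def by blast
  define d where "d = (\<lambda>n. (if n = s then 1 else 0) - u z n)"
  have "l2inner (analysis_op h x) d = 0" for x
  proof -
    have "(\<lambda>n. analysis_op h x n * cnj (u z n)) = (\<lambda>n. u x n * cnj (u z n))"
      by (simp add: fun_eq_iff u_def analysis_on_def analysis_op_def)
    hence "l2inner (analysis_op h x) (u z) = l2inner (u x) (u z)" by (simp add: l2inner_def)
    moreover have "l2inner (analysis_op h x) d
        = l2inner (analysis_op h x) (\<lambda>n. if n = s then 1 else 0) - l2inner (analysis_op h x) (u z)"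
      unfolding d_def by (rule l2inner_diff_right[OF frame_bounds(3) l2_indicator reduced_bounds(3)])
    ultimately show ?thesis using z[of x] by (simp add: l2inner_indicator_right analysis_op_def)
  qed
  moreover have "d \<in> l2" unfolding d_def by (intro l2_diff l2_indicator reduced_bounds(3))
  moreover have "d s = 1" "\<forall>t\<in>S. t \<noteq> s \<longrightarrow> d t = 0"
    using s by (simp_all add: d_def u_def analysis_on_def)
  ultimately show ?thesis by (auto simp: l2_orth_def)
qed

lemma echelon_map:
  "distinct ts \<Longrightarrow> (\<And>t. t \<in> set ts \<Longrightarrow> d t t = 1) \<Longrightarrow>
    (\<And>t t'. t \<in> set ts \<Longrightarrow> t' \<in> set ts \<Longrightarrow> t' \<noteq> t \<Longrightarrow> d t' t = 0) \<Longrightarrow> echelon (map d ts)"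
  by (induction ts) auto

text \<open>Orthonormalising the vectors of \<open>deleted_index_orth_vector\<close> for \<open>N + 1\<close> deleted
  indices would give \<open>N + 1\<close> orthonormal vectors in \<open>(Ran U)\<^sup>\<bottom>\<close>.\<close>
lemma deletable_set_card_le:
  fixes h :: "nat \<Rightarrow> 'a::complex_hilbert"
  assumes frame: "frame h" and Y: "finite Y" "Y \<subseteq> l2"
    and net: "\<forall>c\<in>l2_orth (range (analysis_op h)). l2_sqnorm c \<le> 1 \<longrightarrow>
      (\<exists>y\<in>Y. l2_sqnorm (\<lambda>n. c n - y n) < 1/2)"
    and reduced: "frame_on (UNIV - S) h"
  shows "finite S \<and> card S \<le> card Y"
proof (rule ccontr)
  assume "\<not> (finite S \<and> card S \<le> card Y)"
  then obtain T where T: "T \<subseteq> S" "finite T" "card T = Suc (card Y)"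
    by (metis infinite_arbitrarily_large not_le_imp_less obtain_subset_with_card_n Suc_leI)
  have "\<forall>t\<in>S. \<exists>d. d \<in> l2_orth (range (analysis_op h)) \<and> d t = 1 \<and> (\<forall>t'\<in>S. t' \<noteq> t \<longrightarrow> d t' = 0)"
    using deleted_index_orth_vector[OF frame reduced] by blast
  then obtain d where d: "\<And>t. t \<in> S \<Longrightarrow> d t \<in> l2_orth (range (analysis_op h)) \<and> d t t = 1 \<and>
      (\<forall>t'\<in>S. t' \<noteq> t \<longrightarrow> d t t' = 0)"
    by (auto dest!: bchoice)
  define ts where "ts = sorted_list_of_set T"
  have ts: "distinct ts" "set ts = T" using T(2) by (auto simp: ts_def)
  have "echelon (map d ts)"
  proof (rule echelon_map[OF ts(1)])
    fix t assume "t \<in> set ts"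
    thus "d t t = 1" using d T(1) unfolding ts(2)[symmetric] by blast
  next
    fix t t' assume "t \<in> set ts" "t' \<in> set ts" "t' \<noteq> t"
    thus "d t' t = 0" using d[of t'] T(1) unfolding ts(2)[symmetric] by (metis subsetD)
  qed
  moreover have "set (map d ts) \<subseteq> l2_orth (range (analysis_op h))" using d T(1) ts by auto
  ultimately have "set (gram_schmidt (map d ts)) \<subseteq> l2_orth (range (analysis_op h))"
    "l2_orthonormal (set (gram_schmidt (map d ts)))" "card (set (gram_schmidt (map d ts))) = card T"
    using gram_schmidt_orthonormal[of "range (analysis_op h)" "map d ts"] frame_analysis_op_l2[OF frame]
      distinct_card[OF ts(1)] ts(2) by auto
  hence "card T \<le> card Y" using l2_orthonormal_card_le_net[OF Y net] by metis
  with T(3) show False by simp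
qed

lemma near_riesz_if_compact_expanding_on_orth:
  fixes h :: "nat \<Rightarrow> 'a::complex_hilbert"
  assumes frame: "frame h" and compact: "l2_compact T"
    and expanding: "\<And>c c'. c \<in> l2_orth (range (analysis_op h)) \<Longrightarrow> c' \<in> l2_orth (range (analysis_op h)) \<Longrightarrow>
      l2_sqnorm (\<lambda>n. c n - c' n) \<le> l2_sqnorm (\<lambda>n. T c n - T c' n)"
  shows "near_riesz h"
proof -
  have "l2_orth (range (analysis_op h)) \<subseteq> l2" by (auto simp: l2_orth_def)
  from l2_compact_expanding_finite_net[OF compact this expanding]
  obtain Y where "finite Y" "Y \<subseteq> l2" "\<forall>c\<in>l2_orth (range (analysis_op h)). l2_sqnorm c \<le> 1 \<longrightarrow>
      (\<exists>y\<in>Y. l2_sqnorm (\<lambda>n. c n - y n) < 1/2)"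
    by blast
  thus ?thesis
    using frame deletable_set_card_le[OF frame] unfolding near_riesz_def by blast
qed

theorem corollary3p2:
  fixes f g :: "nat \<Rightarrow> 'h::complex_hilbert"
  assumes "separable_hilbert TYPE('h)"
    and "infinite_dimensional TYPE('h)"
    and "frame f" and "frame g"
    and "l2_compact (\<lambda>c. c - analysis_op g (analysis_adj f c))"
  shows "near_riesz f \<and> near_riesz g"
proof
  let ?T = "\<lambda>c. c - analysis_op g (analysis_adj f c)"
  show "near_riesz f"
  proof (rule near_riesz_if_compact_expanding_on_orth[OF assms(3,5)])
    fix c c' assume "c \<in> l2_orth (range (analysis_op f))" "c' \<in> l2_orth (range (analysis_op f))"
    thus "l2_sqnorm (\<lambda>n. c n - c' n) \<le> l2_sqnorm (\<lambda>n. ?T c n - ?T c' n)"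
      by (simp add: analysis_adj_eq_zero analysis_op_def cinner_zero_left)
  qed
  show "near_riesz g"
  proof (rule near_riesz_if_compact_expanding_on_orth[OF assms(4,5)])
    fix c c' assume c: "c \<in> l2_orth (range (analysis_op g))" "c' \<in> l2_orth (range (analysis_op g))"
    define v where "v = analysis_op g (analysis_adj f c - analysis_adj f c')"
    have "v \<in> l2" unfolding v_def by (rule frame_analysis_op_l2[OF assms(4)])
    moreover have "l2inner v (\<lambda>n. c n - c' n) = 0"
      using l2_orth_diff[OF _ c] frame_analysis_op_l2[OF assms(4)] unfolding v_def l2_orth_def by blast
    ultimately have "l2_sqnorm (\<lambda>n. c n - c' n) \<le> l2_sqnorm (\<lambda>n. (c n - c' n) - v n)"
      using c by (intro l2_sqnorm_le_diff_orth l2_diff) (auto simp: l2_orth_def)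
    thus "l2_sqnorm (\<lambda>n. c n - c' n) \<le> l2_sqnorm (\<lambda>n. ?T c n - ?T c' n)"
      by (simp add: v_def analysis_on_UNIV[symmetric] analysis_on_diff algebra_simps)
  qed
qed

end
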